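(* Let $f,g:\mathbb{R}^n\to\mathbb{R}\cup\{+\infty\}$ be two functions with nonempty convex domains and $S,R:\mathbb{R}^n\to\mathbb{R}\cup\{\pm\infty\}$ be even functions. (i) If $f$ is directionally $S$-smooth, then its Legendre transform $f^*$ is directionally $S^*$-convex. (ii) If $g$ is directionally $R$-convex, then $g^*$ is directionally $R^*$-smooth.
   Context: A function $h$ with convex domain is directionally $S$-smooth if $h((1-t)x_0+tx_1)+t(1-t)S(x_1-x_0)\ge(1-t)h(x_0)+th(x_1)$ for all $t\in(0,1)$ and all $x_0,x_1\in\mathbb{R}^n$ with $(1-t)x_0+tx_1\in\mathrm{dom}\,h$; it is directionally $R$-convex if $h((1-t)x_0+tx_1)+t(1-t)R(x_1-x_0)\le(1-t)h(x_0)+th(x_1)$ for all $t\in(0,1)$ and all $x_0,x_1\in\mathrm{dom}\,h$. Legendre transforms: $f^*(y)=\sup_x\{\langle x,y\rangle-f(x)\}$, $S^*(v)=\sup_u\{\langle u,v\rangle-S(u)\}$. *)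

theory Defs
  imports "HOL-Analysis.Analysis" "HOL-Library.Extended_Real"
begin

definition edom :: "('a \<Rightarrow> ereal) \<Rightarrow> 'a set" where
  "edom h = {x. h x < \<infinity>}"

definition legendre :: "(real^'n \<Rightarrow> ereal) \<Rightarrow> real^'n \<Rightarrow> ereal" where
  "legendre f y = (SUP x. ereal (x \<bullet> y) - f x)"

definition dir_smooth :: "(real^'n \<Rightarrow> ereal) \<Rightarrow> (real^'n \<Rightarrow> ereal) \<Rightarrow> bool" where
  "dir_smooth S h \<longleftrightarrow>
     (\<forall>t::real. \<forall>x0 x1. 0 < t \<and> t < 1 \<and> (1 - t) *\<^sub>R x0 + t *\<^sub>R x1 \<in> edom h \<longrightarrow>
        h ((1 - t) *\<^sub>R x0 + t *\<^sub>R x1) + ereal (t * (1 - t)) * S (x1 - x0)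
          \<ge> ereal (1 - t) * h x0 + ereal t * h x1)"

definition dir_convex :: "(real^'n \<Rightarrow> ereal) \<Rightarrow> (real^'n \<Rightarrow> ereal) \<Rightarrow> bool" where
  "dir_convex R h \<longleftrightarrow>
     (\<forall>t::real. \<forall>x0 x1. 0 < t \<and> t < 1 \<and> x0 \<in> edom h \<and> x1 \<in> edom h \<longrightarrow>
        h ((1 - t) *\<^sub>R x0 + t *\<^sub>R x1) + ereal (t * (1 - t)) * R (x1 - x0)
          \<le> ereal (1 - t) * h x0 + ereal t * h x1)"

end

theory Submission
  imports Defs
begin

(* Everything rests on the identity, for x_t = (1-t) x0 + t x1 and y_t = (1-t) y0 + t y1,
     (1-t) <x0,y0> + t <x1,y1> = <x_t,y_t> + t(1-t) <x1-x0, y1-y0>.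
   (i) Write a point x of dom f as x_t with x1 - x0 = u.  S-smoothness of f at x and the
   Fenchel-Young inequalities at (x0,y0) and (x1,y1) give
     <x,y_t> - f x + t(1-t) (<u, y1-y0> - S u) <= (1-t) f*(y0) + t f*(y1);
   the supremum over x and u is the claim.
   (ii) For x0, x1 in dom g, R-convexity of g and Fenchel-Young at (x_t,y_t) and (x1-x0, y1-y0) give
     (1-t) (<x0,y0> - g x0) + t (<x1,y1> - g x1) <= g*(y_t) + t(1-t) R*(y1-y0);
   the supremum over x0 and x1 is the claim. *)

lemma inner_convex_combination:
  fixes x0 x1 y0 y1 :: "'a::real_inner"
  shows "(1 - t) * (x0 \<bullet> y0) + t * (x1 \<bullet> y1)
       = ((1 - t) *\<^sub>R x0 + t *\<^sub>R x1) \<bullet> ((1 - t) *\<^sub>R y0 + t *\<^sub>R y1) + t * (1 - t) * ((x1 - x0) \<bullet> (y1 - y0))"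
  by (simp add: algebra_simps)

lemma ereal_weighted_sum_le_realE:
  assumes "ereal a * x + ereal b * y \<le> ereal K" "0 < a" "0 < b" "x \<noteq> -\<infinity>" "y \<noteq> -\<infinity>"
  obtains x' y' where "x = ereal x'" "y = ereal y'" "a * x' + b * y' \<le> K"
  using assms by (cases x; cases y) auto

lemma legendre_ge: "ereal (x \<bullet> y) - f x \<le> legendre f y"
  unfolding legendre_def by (rule SUP_upper) simp

lemma fenchel_young:
  assumes "f x = ereal r" "legendre f y = ereal F"
  shows "x \<bullet> y - r \<le> F"
  using legendre_ge[of x y f] assms by simp

lemma legendre_le_ereal_iff:
  assumes "\<forall>x. f x \<noteq> -\<infinity>"
  shows "legendre f y \<le> ereal B \<longleftrightarrow> (\<forall>x r. f x = ereal r \<longrightarrow> x \<bullet> y - r \<le> B)"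
proof -
  have "ereal (x \<bullet> y) - f x \<le> ereal B \<longleftrightarrow> (\<forall>r. f x = ereal r \<longrightarrow> x \<bullet> y - r \<le> B)" for x
    using assms by (cases "f x") auto
  then show ?thesis
    unfolding legendre_def SUP_le_iff by simp
qed

lemma legendre_not_MInf:
  assumes "\<forall>x. f x \<noteq> -\<infinity>" "edom f \<noteq> {}"
  shows "legendre f y \<noteq> -\<infinity>"
proof -
  obtain z where "f z < \<infinity>" using assms(2) unfolding edom_def by auto
  then have "ereal (z \<bullet> y) - f z \<noteq> -\<infinity>" using assms(1) by (cases "f z") auto
  then show ?thesis using legendre_ge[of z y f] by auto
qed

lemma legendre_convex:
  assumes "\<forall>x. f x \<noteq> -\<infinity>" "0 \<le> t" "t \<le> 1"
  shows "legendre f ((1 - t) *\<^sub>R y0 + t *\<^sub>R y1) \<le> ereal (1 - t) * legendre f y0 + ereal t * legendre f y1"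
  unfolding legendre_def[of f "(1 - t) *\<^sub>R y0 + t *\<^sub>R y1"]
proof (rule SUP_least)
  fix x
  show "ereal (x \<bullet> ((1 - t) *\<^sub>R y0 + t *\<^sub>R y1)) - f x \<le> ereal (1 - t) * legendre f y0 + ereal t * legendre f y1"
  proof (cases "f x")
    case (real r)
    have "ereal (x \<bullet> ((1 - t) *\<^sub>R y0 + t *\<^sub>R y1)) - f x
        = ereal (1 - t) * (ereal (x \<bullet> y0) - f x) + ereal t * (ereal (x \<bullet> y1) - f x)"
      using real by (simp add: algebra_simps)
    also have "\<dots> \<le> ereal (1 - t) * legendre f y0 + ereal t * legendre f y1"
      using assms(2,3) by (intro add_mono ereal_mult_left_mono legendre_ge) auto
    finally show ?thesis .
  qed (use assms(1) in auto)
qed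

lemma legendre_weighted_sum_le:
  fixes f h :: "real^'n \<Rightarrow> ereal"
  assumes f: "\<forall>x. f x \<noteq> -\<infinity>" "edom f \<noteq> {}" and h: "\<forall>u. h u \<noteq> -\<infinity>" "edom h \<noteq> {}"
    and ab: "0 < a" "0 < b"
    and bound: "\<And>x u r s. f x = ereal r \<Longrightarrow> h u = ereal s \<Longrightarrow> a * (x \<bullet> y - r) + b * (u \<bullet> v - s) \<le> K"
  shows "ereal a * legendre f y + ereal b * legendre h v \<le> ereal K"
proof -
  have f_bound: "legendre f y \<le> ereal ((K - b * (u \<bullet> v - s)) / a)" if "h u = ereal s" for u s
    unfolding legendre_le_ereal_iff[OF f(1)]
    using bound[OF _ that] ab(1) by (simp add: pos_le_divide_eq mult.commute le_diff_eq)
  obtain w where "h w < \<infinity>" using h(2) unfolding edom_def by auto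
  then obtain s0 where "h w = ereal s0" using h(1) by (cases "h w") auto
  then obtain F where F: "legendre f y = ereal F"
    using f_bound legendre_not_MInf[OF f] by (cases "legendre f y") auto
  have "legendre h v \<le> ereal ((K - a * F) / b)"
    unfolding legendre_le_ereal_iff[OF h(1)]
    using f_bound F ab by (simp add: pos_le_divide_eq mult.commute le_diff_eq add.commute)
  then show ?thesis
    using legendre_not_MInf[OF h] F ab by (cases "legendre h v") (auto simp: pos_le_divide_eq mult.commute)
qed

lemma dir_smooth_centered:
  assumes "dir_smooth S h" "0 < t" "t < 1" "x \<in> edom h"
  shows "ereal (1 - t) * h (x - t *\<^sub>R u) + ereal t * h (x + (1 - t) *\<^sub>R u)
       \<le> h x + ereal (t * (1 - t)) * S u"
proof -
  have "(1 - t) *\<^sub>R (x - t *\<^sub>R u) + t *\<^sub>R (x + (1 - t) *\<^sub>R u) = x"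
       "(x + (1 - t) *\<^sub>R u) - (x - t *\<^sub>R u) = u"
    by (simp_all add: algebra_simps)
  then show ?thesis
    using assms unfolding dir_smooth_def by metis
qed

lemma dir_smooth_not_MInf:
  assumes f: "\<forall>x. f x \<noteq> -\<infinity>" "edom f \<noteq> {}" and smooth: "dir_smooth S f"
  shows "S u \<noteq> -\<infinity>"
proof
  assume S: "S u = -\<infinity>"
  obtain z where z: "z \<in> edom f" using f(2) by auto
  have "ereal (1/2) * f (z - (1/2) *\<^sub>R u) + ereal (1/2) * f (z + (1/2) *\<^sub>R u) \<le> f z + ereal (1/4) * S u"
    using dir_smooth_centered[OF smooth _ _ z, of "1/2" u] by simp
  moreover have "f z + ereal (1/4) * S u = -\<infinity>"
    using S z f(1) unfolding edom_def by (cases "f z") auto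
  moreover have "ereal (1/2) * f (z - (1/2) *\<^sub>R u) + ereal (1/2) * f (z + (1/2) *\<^sub>R u) \<noteq> -\<infinity>"
    using f(1) by (cases "f (z - (1/2) *\<^sub>R u)"; cases "f (z + (1/2) *\<^sub>R u)") auto
  ultimately show False by simp
qed

lemma legendre_dir_convex_if_dir_smooth:
  fixes f S :: "real^'n \<Rightarrow> ereal"
  assumes f: "\<forall>x. f x \<noteq> -\<infinity>" "edom f \<noteq> {}" and smooth: "dir_smooth S f"
  shows "dir_convex (legendre S) (legendre f)"
  unfolding dir_convex_def
proof (intro allI impI, elim conjE)
  fix t :: real and y0 y1
  assume t: "0 < t" "t < 1" and "y0 \<in> edom (legendre f)" "y1 \<in> edom (legendre f)"
  then have "legendre f y0 \<noteq> \<infinity>" "legendre f y1 \<noteq> \<infinity>"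
    by (simp_all add: edom_def)
  then obtain P Q where P: "legendre f y0 = ereal P" and Q: "legendre f y1 = ereal Q"
    using legendre_not_MInf[OF f] by (meson ereal_cases)
  define yt c where "yt = (1 - t) *\<^sub>R y0 + t *\<^sub>R y1" and "c = t * (1 - t)"
  have c: "0 < c" using t by (simp add: c_def)
  have "legendre f yt + ereal c * legendre S (y1 - y0) \<le> ereal ((1 - t) * P + t * Q)"
  proof (cases "edom S = {}")
    case True
    then have "legendre S (y1 - y0) = -\<infinity>" by (simp add: edom_def legendre_def)
    moreover have "legendre f yt \<le> ereal ((1 - t) * P + t * Q)"
      using legendre_convex[OF f(1), of t y0 y1] t P Q by (simp add: yt_def)
    ultimately show ?thesis using c by (cases "legendre f yt") auto
  next
    case False
    have "ereal 1 * legendre f yt + ereal c * legendre S (y1 - y0) \<le> ereal ((1 - t) * P + t * Q)"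
    proof (rule legendre_weighted_sum_le[OF f _ False _ c])
      fix x u r s assume fx: "f x = ereal r" and Su: "S u = ereal s"
      define x0 x1 where "x0 = x - t *\<^sub>R u" and "x1 = x + (1 - t) *\<^sub>R u"
      have "ereal (1 - t) * f x0 + ereal t * f x1 \<le> ereal (r + c * s)"
        using dir_smooth_centered[OF smooth t, of x u] fx Su by (simp add: x0_def x1_def c_def edom_def)
      then obtain r0 r1 where r0: "f x0 = ereal r0" and r1: "f x1 = ereal r1"
          and smooth_xu: "(1 - t) * r0 + t * r1 \<le> r + c * s"
        by (rule ereal_weighted_sum_le_realE) (use t f(1) in auto)
      have "(1 - t) * (x0 \<bullet> y0 - r0) + t * (x1 \<bullet> y1 - r1) \<le> (1 - t) * P + t * Q"
        using fenchel_young[OF r0 P] fenchel_young[OF r1 Q] t by (intro add_mono mult_left_mono) auto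
      moreover have "(1 - t) *\<^sub>R x0 + t *\<^sub>R x1 = x" "x1 - x0 = u"
        by (simp_all add: x0_def x1_def algebra_simps)
      then have "(1 - t) * (x0 \<bullet> y0) + t * (x1 \<bullet> y1) = x \<bullet> yt + c * (u \<bullet> (y1 - y0))"
        using inner_convex_combination[of t x0 y0 x1 y1] by (simp add: yt_def c_def)
      ultimately show "1 * (x \<bullet> yt - r) + c * (u \<bullet> (y1 - y0) - s) \<le> (1 - t) * P + t * Q"
        using smooth_xu by (simp add: algebra_simps)
    qed (use smooth dir_smooth_not_MInf[OF f] in auto)
    then show ?thesis by simp
  qed
  then show "legendre f ((1 - t) *\<^sub>R y0 + t *\<^sub>R y1) + ereal (t * (1 - t)) * legendre S (y1 - y0)
      \<le> ereal (1 - t) * legendre f y0 + ereal t * legendre f y1"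
    using P Q by (simp add: yt_def c_def)
qed

lemma dir_convexD:
  assumes "dir_convex R h" "0 < t" "t < 1" "x0 \<in> edom h" "x1 \<in> edom h"
  shows "h ((1 - t) *\<^sub>R x0 + t *\<^sub>R x1) + ereal (t * (1 - t)) * R (x1 - x0)
       \<le> ereal (1 - t) * h x0 + ereal t * h x1"
  using assms unfolding dir_convex_def by blast

lemma dir_convex_zero_not_PInf:
  assumes g: "\<forall>x. g x \<noteq> -\<infinity>" "edom g \<noteq> {}" and conv: "dir_convex R g"
  shows "R 0 \<noteq> \<infinity>"
proof
  assume R0: "R 0 = \<infinity>"
  obtain z where z: "z \<in> edom g" using g(2) by auto
  have "g z + ereal (1/4) * R 0 \<le> ereal (1/2) * g z + ereal (1/2) * g z"
    using dir_convexD[OF conv _ _ z z, of "1/2"] by simp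
  moreover have "g z \<noteq> \<infinity>" "g z \<noteq> -\<infinity>" using z g(1) by (auto simp: edom_def)
  ultimately show False using R0 by (cases "g z") auto
qed

lemma legendre_dir_smooth_if_dir_convex:
  fixes g R :: "real^'n \<Rightarrow> ereal"
  assumes g: "\<forall>x. g x \<noteq> -\<infinity>" "edom g \<noteq> {}" and conv: "dir_convex R g"
  shows "dir_smooth (legendre R) (legendre g)"
  unfolding dir_smooth_def
proof (intro allI impI, elim conjE)
  fix t :: real and y0 y1 :: "real^'n"
  define yt c w where "yt = (1 - t) *\<^sub>R y0 + t *\<^sub>R y1" and "c = t * (1 - t)" and "w = y1 - y0"
  assume t: "0 < t" "t < 1" and "yt \<in> edom (legendre g)"
  then have "legendre g yt \<noteq> \<infinity>" by (simp add: edom_def)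
  then obtain G where G: "legendre g yt = ereal G"
    using legendre_not_MInf[OF g] by (cases "legendre g yt") auto
  have c: "0 < c" using t by (simp add: c_def)
  have "ereal (1 - t) * legendre g y0 + ereal t * legendre g y1 \<le> legendre g yt + ereal c * legendre R w"
  proof (cases "legendre R w")
    case PInf
    then show ?thesis using G c by simp
  next
    case MInf
    then have "R 0 = \<infinity>" using legendre_ge[of 0 w R] by (cases "R 0") auto
    with dir_convex_zero_not_PInf[OF g conv] show ?thesis by contradiction
  next
    case (real \<rho>)
    have "ereal (1 - t) * legendre g y0 + ereal t * legendre g y1 \<le> ereal (G + c * \<rho>)"
    proof (rule legendre_weighted_sum_le[OF g g])
      fix x0 x1 r0 r1 assume r0: "g x0 = ereal r0" and r1: "g x1 = ereal r1"
      define xt where "xt = (1 - t) *\<^sub>R x0 + t *\<^sub>R x1"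
      have "g xt + ereal c * R (x1 - x0) \<le> ereal ((1 - t) * r0 + t * r1)"
        using dir_convexD[OF conv t, of x0 x1] r0 r1 by (simp add: edom_def xt_def c_def)
      moreover have "R (x1 - x0) \<noteq> -\<infinity>"
        using legendre_ge[of "x1 - x0" w R] real by auto
      ultimately obtain gt \<rho>' where gt: "g xt = ereal gt" and \<rho>': "R (x1 - x0) = ereal \<rho>'"
          and conv_x: "gt + c * \<rho>' \<le> (1 - t) * r0 + t * r1"
        using ereal_weighted_sum_le_realE[of 1 "g xt" c "R (x1 - x0)"] c g(1) by auto
      have "xt \<bullet> yt - gt + c * ((x1 - x0) \<bullet> w - \<rho>') \<le> G + c * \<rho>"
        using fenchel_young[OF gt G] fenchel_young[OF \<rho>' real] c by (intro add_mono mult_left_mono) auto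
      moreover have "(1 - t) * (x0 \<bullet> y0) + t * (x1 \<bullet> y1) = xt \<bullet> yt + c * ((x1 - x0) \<bullet> w)"
        using inner_convex_combination[of t x0 y0 x1 y1] by (simp add: xt_def yt_def c_def w_def)
      ultimately show "(1 - t) * (x0 \<bullet> y0 - r0) + t * (x1 \<bullet> y1 - r1) \<le> G + c * \<rho>"
        using conv_x by (simp add: algebra_simps)
    qed (use t in auto)
    then show ?thesis using G real by simp
  qed
  then show "ereal (1 - t) * legendre g y0 + ereal t * legendre g y1
      \<le> legendre g ((1 - t) *\<^sub>R y0 + t *\<^sub>R y1) + ereal (t * (1 - t)) * legendre R (y1 - y0)"
    by (simp add: yt_def c_def w_def)
qed

theorem proposition2p9:
  fixes f g S R :: "real^'n \<Rightarrow> ereal"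
  assumes f_nm: "\<forall>x. f x \<noteq> -\<infinity>" and g_nm: "\<forall>x. g x \<noteq> -\<infinity>"
    and f_dom: "edom f \<noteq> {}" "convex (edom f)"
    and g_dom: "edom g \<noteq> {}" "convex (edom g)"
    and S_even: "\<forall>u. S (- u) = S u"
    and R_even: "\<forall>u. R (- u) = R u"
  shows "(dir_smooth S f \<longrightarrow> dir_convex (legendre S) (legendre f))
       \<and> (dir_convex R g \<longrightarrow> dir_smooth (legendre R) (legendre g))"
  using legendre_dir_convex_if_dir_smooth[OF f_nm f_dom(1)]
    legendre_dir_smooth_if_dir_convex[OF g_nm g_dom(1)]
  by blast

end
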